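(* Let $U,X,Y$ be Banach spaces and let $S$ be a $(U,X,Y)$-relation. If $S=\operatorname{Sys}(A,B,C)=\operatorname{Sys}(A',B',C')$, where $A$ and $A'$ generate strongly continuous semigroups on $X$, $B,B':U\to X$ are bounded, and $C:\operatorname{Dom}(A)\to Y$, $C':\operatorname{Dom}(A')\to Y$ are bounded for the respective graph norms, then $A=A'$ (including equality of domains), $B=B'$ and $C=C'$.
   Context: For Banach spaces $U,X,Y$, a $(U,X,Y)$-relation is any subset of $C^0(\mathbb{R}_{\ge 0},U)\times C^0(\mathbb{R}_{\ge 0},X)\times C^0(\mathbb{R}_{\ge 0},Y)$; its elements $(u,x,y)$ are called input, state and output. If $A$ generates a strongly continuous semigroup $(e^{At})_{t\ge0}$ on $X$, $B:U\to X$ is bounded and $C:\operatorname{Dom}(A)\to Y$ is bounded for the graph norm of $A$, then $\operatorname{Sys}(A,B,C)$ denotes the $(U,X,Y)$-relation consisting of all $(u,x,y)$ with $u\in C^0(\mathbb{R}_{\ge0},U)$, $x\in C^0(\mathbb{R}_{\ge0},\operatorname{Dom}(A))\cap C^1(\mathbb{R}_{\ge0},X)$, $y\in C^0(\mathbb{R}_{\ge0},Y)$ satisfying $\dot x(t)=Ax(t)+Bu(t)$ and $y(t)=Cx(t)$ for all $t\ge0$. *)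

theory Defs
  imports "HOL-Analysis.Analysis"
begin

text \<open>Strongly continuous (C0) semigroup of bounded linear operators on a Banach space,
  indexed by t \<ge> 0 (values for t < 0 are irrelevant).\<close>
definition c0_semigroup :: "(real \<Rightarrow> 'a::banach \<Rightarrow> 'a) \<Rightarrow> bool" where
  "c0_semigroup T \<longleftrightarrow>
     (\<forall>t\<ge>0. bounded_linear (T t)) \<and> T 0 = id \<and>
     (\<forall>s\<ge>0. \<forall>t\<ge>0. T (s + t) = T s \<circ> T t) \<and>
     (\<forall>x. continuous_on {0..} (\<lambda>t. T t x))"

definition generator_dom :: "(real \<Rightarrow> 'a::banach \<Rightarrow> 'a) \<Rightarrow> 'a set" where
  "generator_dom T = {x. \<exists>v. ((\<lambda>h. inverse h *\<^sub>R (T h x - x)) \<longlongrightarrow> v) (at_right 0)}"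

text \<open>The operator A with domain D is the generator of T (A is only meaningful on D).\<close>
definition generates :: "(real \<Rightarrow> 'a::banach \<Rightarrow> 'a) \<Rightarrow> 'a set \<Rightarrow> ('a \<Rightarrow> 'a) \<Rightarrow> bool" where
  "generates T D A \<longleftrightarrow> D = generator_dom T \<and>
     (\<forall>x\<in>D. ((\<lambda>h. inverse h *\<^sub>R (T h x - x)) \<longlongrightarrow> A x) (at_right 0))"

definition is_c0_generator :: "'a::banach set \<Rightarrow> ('a \<Rightarrow> 'a) \<Rightarrow> bool" where
  "is_c0_generator D A \<longleftrightarrow> (\<exists>T. c0_semigroup T \<and> generates T D A)"

definition graph_bounded ::
  "'x::banach set \<Rightarrow> ('x \<Rightarrow> 'x) \<Rightarrow> ('x \<Rightarrow> 'y::banach) \<Rightarrow> bool" where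
  "graph_bounded D A C \<longleftrightarrow>
     (\<forall>x\<in>D. \<forall>z\<in>D. C (x + z) = C x + C z) \<and>
     (\<forall>c. \<forall>x\<in>D. C (c *\<^sub>R x) = c *\<^sub>R C x) \<and>
     (\<exists>K. \<forall>x\<in>D. norm (C x) \<le> K * (norm x + norm (A x)))"

text \<open>Sys(A,B,C): functions on the reals, of which only the restriction to [0,\<infinity>) matters.
  Continuity of x into Dom(A) (with the graph norm) means x(t) \<in> D and both x and A \<circ> x
  are continuous.\<close>
definition Sys ::
  "'x::banach set \<Rightarrow> ('x \<Rightarrow> 'x) \<Rightarrow> ('u::banach \<Rightarrow> 'x) \<Rightarrow> ('x \<Rightarrow> 'y::banach)
   \<Rightarrow> ((real \<Rightarrow> 'u) \<times> (real \<Rightarrow> 'x) \<times> (real \<Rightarrow> 'y)) set" where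
  "Sys D A B C = {(u, x, y).
     continuous_on {0..} u \<and>
     (\<forall>t\<ge>0. x t \<in> D) \<and> continuous_on {0..} x \<and> continuous_on {0..} (\<lambda>t. A (x t)) \<and>
     (\<exists>x'. continuous_on {0..} x' \<and> (\<forall>t\<ge>0. (x has_vector_derivative x' t) (at t within {0..}))
        \<and> (\<forall>t\<ge>0. x' t = A (x t) + B (u t))) \<and>
     continuous_on {0..} y \<and> (\<forall>t\<ge>0. y t = C (x t))}"

end

theory Submission
  imports Defs
begin

(* A system determines its coefficients through the initial derivatives of its classical
   trajectories. For x in Dom(A) the orbit t |-> T(t) x of the semigroup generated by A is a
   trajectory with zero input whose derivative at 0 is A x; since it is also a trajectory of
   (A', B', C'), that derivative equals A' x + B' 0 = A' x, so x lies in Dom(A'), and comparing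
   outputs at time 0 gives C x = C' x. For a constant input u, the curve
   t |-> integral_0^t T(s) B u ds is a trajectory starting at 0 with initial derivative B u,
   which must equal A' 0 + B' u = B' u. Exchanging the two systems gives the converse.
   The orbit is differentiable (and not merely right differentiable) because
   T(t) x = x + integral_0^t T(s) A x ds, which follows from the right derivative alone by a
   one-sided mean value argument. *)

lemma integral_average_tendsto_at_right:
  fixes f :: "real \<Rightarrow> 'a::banach"
  assumes f: "continuous_on {0..} f" and t: "t \<ge> 0"
  shows "((\<lambda>h. inverse h *\<^sub>R integral {t..t+h} f) \<longlongrightarrow> f t) (at_right 0)"
proof (rule tendstoI)
  fix e :: real assume e: "e > 0"
  from f t e obtain d where d: "d > 0"
    and close: "\<And>s. s \<in> {0..} \<Longrightarrow> dist s t < d \<Longrightarrow> dist (f s) (f t) < e/2"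
    unfolding continuous_on_iff by (metis atLeast_iff half_gt_zero)
  have "eventually (\<lambda>h. h \<in> {0<..<d}) (at_right (0::real))"
    using eventually_at_right_real d by blast
  then show "eventually (\<lambda>h. dist (inverse h *\<^sub>R integral {t..t+h} f) (f t) < e) (at_right 0)"
  proof eventually_elim
    case (elim h)
    then have h: "0 < h" "h < d" by auto
    have cont: "continuous_on {t..t+h} f" by (rule continuous_on_subset[OF f]) (use t in auto)
    have "integral {t..t+h} f - h *\<^sub>R f t = integral {t..t+h} (\<lambda>s. f s - f t)"
      using integrable_continuous_interval[OF cont] h by (subst integral_diff) auto
    also have "norm \<dots> \<le> e/2 * (t + h - t)"
      by (intro integral_bound continuous_intros cont)
        (use h t close in \<open>auto simp: dist_norm less_imp_le\<close>)
    finally have bound: "norm (integral {t..t+h} f - h *\<^sub>R f t) \<le> e/2 * h" by simp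
    have "inverse h *\<^sub>R integral {t..t+h} f - f t
        = inverse h *\<^sub>R (integral {t..t+h} f - h *\<^sub>R f t)"
      using h by (simp add: algebra_simps)
    then have "norm (inverse h *\<^sub>R integral {t..t+h} f - f t)
        = inverse h * norm (integral {t..t+h} f - h *\<^sub>R f t)"
      using h by simp
    also have "\<dots> \<le> inverse h * (e/2 * h)" using bound h by (intro mult_left_mono) auto
    also have "\<dots> < e" using h e by simp
    finally show ?case by (simp add: dist_norm)
  qed
qed

lemma integral_has_vector_derivative_atLeast_0:
  fixes f :: "real \<Rightarrow> 'a::banach"
  assumes f: "continuous_on {0..} f" and t: "t \<ge> 0"
  shows "((\<lambda>u. integral {0..u} f) has_vector_derivative f t) (at t within {0..})"
proof -
  have "continuous_on {0..t+1} f" by (rule continuous_on_subset[OF f]) auto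
  then have "((\<lambda>u. integral {0..u} f) has_vector_derivative f t) (at t within {0..t+1})"
    using t by (intro integral_has_vector_derivative) auto
  moreover have "at t within {0..t+1} = at t within {0..}"
    by (rule at_within_nhd[where S="{..<t+1}"]) auto
  ultimately show ?thesis by simp
qed

lemma at_0_within_atLeast_0_neq_bot: "at (0::real) within {0..} \<noteq> bot"
proof -
  have "at (0::real) within {0..1} = at 0 within {0..}"
    by (rule at_within_nhd[where S="{..<1}"]) auto
  moreover have "at (0::real) within {0..1} \<noteq> bot" by (simp add: at_within_Icc_at_right)
  ultimately show ?thesis by simp
qed

lemma norm_diff_le_of_right_increments:
  fixes g :: "real \<Rightarrow> 'a::real_normed_vector"
  assumes ab: "a \<le> b" and cont: "continuous_on {a..b} g"
    and incr: "\<And>t. t \<in> {a..<b} \<Longrightarrow> eventually (\<lambda>h. norm (g (t+h) - g t) \<le> e * h) (at_right 0)"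
  shows "norm (g b - g a) \<le> e * (b - a)"
proof -
  define P where "P = {s \<in> {a..b}. norm (g s - g a) \<le> e * (s - a)}"
  have "closed P" unfolding P_def
    by (intro continuous_on_closed_Collect_le continuous_intros cont)
  moreover have "a \<in> P" using ab by (simp add: P_def)
  moreover have bdd: "bdd_above P" unfolding P_def by (rule bdd_aboveI[of _ b]) auto
  ultimately have supP: "Sup P \<in> P" using closed_contains_Sup by blast
  have "Sup P = b"
  proof (rule ccontr)
    assume "Sup P \<noteq> b"
    with supP have c: "a \<le> Sup P" "Sup P < b" by (auto simp: P_def)
    have "eventually (\<lambda>h. norm (g (Sup P + h) - g (Sup P)) \<le> e * h \<and> h \<in> {0<..<b - Sup P})
        (at_right 0)"
      using incr[of "Sup P"] eventually_at_right_real[of 0 "b - Sup P"] c by (auto elim: eventually_conj)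
    then obtain h where h: "norm (g (Sup P + h) - g (Sup P)) \<le> e * h" "0 < h" "h < b - Sup P"
      using eventually_happens'[OF trivial_limit_at_right_real] by force
    have "norm (g (Sup P + h) - g a) \<le> norm (g (Sup P + h) - g (Sup P)) + norm (g (Sup P) - g a)"
      using norm_triangle_ineq[of "g (Sup P + h) - g (Sup P)" "g (Sup P) - g a"] by simp
    also have "\<dots> \<le> e * (Sup P + h - a)"
      using h(1) supP by (simp add: P_def algebra_simps)
    finally have "Sup P + h \<in> P" using h c by (simp add: P_def)
    then have "Sup P + h \<le> Sup P" using bdd by (rule cSup_upper)
    then show False using h by simp
  qed
  then show ?thesis using supP by (simp add: P_def)
qed

lemma right_derivative_zero_imp_eq:
  fixes g :: "real \<Rightarrow> 'a::real_normed_vector"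
  assumes ab: "a \<le> b" and cont: "continuous_on {a..b} g"
    and deriv: "\<And>t. t \<in> {a..<b} \<Longrightarrow> ((\<lambda>h. inverse h *\<^sub>R (g (t+h) - g t)) \<longlongrightarrow> 0) (at_right 0)"
  shows "g b = g a"
proof -
  have bound: "norm (g b - g a) \<le> e * (b - a)" if "e > 0" for e
  proof (rule norm_diff_le_of_right_increments[OF ab cont])
    fix t assume "t \<in> {a..<b}"
    then have "eventually (\<lambda>h. norm (inverse h *\<^sub>R (g (t+h) - g t)) < e) (at_right 0)"
      using deriv that by (auto simp: tendsto_iff dist_norm)
    then show "eventually (\<lambda>h. norm (g (t+h) - g t) \<le> e * h) (at_right 0)"
      using eventually_at_right_less[of 0]
    proof eventually_elim
      case (elim h)
      then have "norm (g (t+h) - g t) = h * norm (inverse h *\<^sub>R (g (t+h) - g t))" by simp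
      also have "\<dots> \<le> h * e" using elim by (intro mult_left_mono) auto
      finally show ?case by (simp add: mult.commute)
    qed
  qed
  have "norm (g b - g a) \<le> 0 + \<epsilon>" if "\<epsilon> > 0" for \<epsilon>
  proof (cases "a = b")
    case False
    with ab have "b - a > 0" by simp
    with bound[of "\<epsilon> / (b - a)"] that
    have "norm (g b - g a) \<le> \<epsilon> / (b - a) * (b - a)" by simp
    with \<open>b - a > 0\<close> show ?thesis by simp
  qed (use that in simp)
  then show ?thesis by (metis field_le_epsilon norm_le_zero_iff right_minus_eq)
qed

locale c0_semigroup_generator =
  fixes T :: "real \<Rightarrow> 'a::banach \<Rightarrow> 'a" and D :: "'a set" and A :: "'a \<Rightarrow> 'a"
  assumes c0: "c0_semigroup T" and gen: "generates T D A"
begin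

lemma bounded_linear_T: "t \<ge> 0 \<Longrightarrow> bounded_linear (T t)"
  using c0 by (simp add: c0_semigroup_def)

lemma T_0_apply: "T 0 x = x"
  using c0 by (simp add: c0_semigroup_def)

lemma T_T_apply: "s \<ge> 0 \<Longrightarrow> t \<ge> 0 \<Longrightarrow> T s (T t x) = T (s + t) x"
  using c0 unfolding c0_semigroup_def by (metis comp_apply)

lemma continuous_on_orbit: "continuous_on {0..} (\<lambda>t. T t x)"
  using c0 by (simp add: c0_semigroup_def)

lemma integrable_orbit: "a \<ge> 0 \<Longrightarrow> (\<lambda>t. T t x) integrable_on {a..b}"
  by (intro integrable_continuous_interval continuous_on_subset[OF continuous_on_orbit]) auto

lemma generator_tendsto: "x \<in> D \<Longrightarrow> ((\<lambda>h. inverse h *\<^sub>R (T h x - x)) \<longlongrightarrow> A x) (at_right 0)"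
  using gen by (simp add: generates_def)

lemma generatorI:
  assumes "((\<lambda>h. inverse h *\<^sub>R (T h x - x)) \<longlongrightarrow> v) (at_right 0)"
  shows "x \<in> D" and "A x = v"
proof -
  show x: "x \<in> D" using gen assms by (auto simp: generates_def generator_dom_def)
  show "A x = v"
    using tendsto_unique[OF trivial_limit_at_right_real generator_tendsto[OF x] assms] .
qed

lemma generator_diff:
  assumes "x \<in> D" "z \<in> D"
  shows "x - z \<in> D" and "A (x - z) = A x - A z"
proof -
  have "eventually (\<lambda>h. inverse h *\<^sub>R (T h x - x) - inverse h *\<^sub>R (T h z - z)
      = inverse h *\<^sub>R (T h (x - z) - (x - z))) (at_right 0)"
    using eventually_at_right_less[of 0]
  proof eventually_elim
    case (elim h)
    then interpret bounded_linear "T h" using bounded_linear_T by simp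
    show ?case by (simp add: diff algebra_simps)
  qed
  then have "((\<lambda>h. inverse h *\<^sub>R (T h (x - z) - (x - z))) \<longlongrightarrow> A x - A z) (at_right 0)"
    using tendsto_diff[OF generator_tendsto[OF assms(1)] generator_tendsto[OF assms(2)]]
    by (rule Lim_transform_eventually[rotated])
  then show "x - z \<in> D" and "A (x - z) = A x - A z" by (rule generatorI)+
qed

lemma generator_zero: shows "0 \<in> D" and "A 0 = 0"
proof -
  have "eventually (\<lambda>h. inverse h *\<^sub>R (T h 0 - 0) = 0) (at_right 0)"
    using eventually_at_right_less[of 0]
    by eventually_elim (simp add: bounded_linear_T linear_simps)
  then have "((\<lambda>h. inverse h *\<^sub>R (T h 0 - 0)) \<longlongrightarrow> 0) (at_right 0)"
    by (rule tendsto_eventually)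
  then show "0 \<in> D" and "A 0 = 0" by (rule generatorI)+
qed

lemma orbit_in_domain:
  assumes x: "x \<in> D" and t: "t \<ge> 0"
  shows "T t x \<in> D" and "A (T t x) = T t (A x)"
proof -
  interpret Tt: bounded_linear "T t" using bounded_linear_T t by simp
  have "eventually (\<lambda>h. T t (inverse h *\<^sub>R (T h x - x)) = inverse h *\<^sub>R (T h (T t x) - T t x))
      (at_right 0)"
    using eventually_at_right_less[of 0]
  proof eventually_elim
    case (elim h)
    then have "T h (T t x) = T t (T h x)" using T_T_apply t by (simp add: add.commute)
    then show ?case by (simp add: Tt.diff Tt.scale)
  qed
  then have "((\<lambda>h. inverse h *\<^sub>R (T h (T t x) - T t x)) \<longlongrightarrow> T t (A x)) (at_right 0)"
    using Tt.tendsto[OF generator_tendsto[OF x]] by (rule Lim_transform_eventually[rotated])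
  then show "T t x \<in> D" and "A (T t x) = T t (A x)" by (rule generatorI)+
qed

lemma integral_orbit_in_domain:
  assumes t: "t \<ge> 0"
  shows "integral {0..t} (\<lambda>s. T s z) \<in> D" and "A (integral {0..t} (\<lambda>s. T s z)) = T t z - z"
proof -
  define F where "F = (\<lambda>s. T s z)"
  (* T h shifts the window [0, t] to [h, t + h], so the difference quotient is the difference
     of the averages of F over [t, t + h] and over [0, h]. *)
  have "eventually (\<lambda>h. inverse h *\<^sub>R integral {t..t+h} F - inverse h *\<^sub>R integral {0..0+h} F
      = inverse h *\<^sub>R (T h (integral {0..t} F) - integral {0..t} F)) (at_right 0)"
    using eventually_at_right_less[of 0]
  proof eventually_elim
    case (elim h)
    have "T h (integral {0..t} F) = integral {0..t} (T h \<circ> F)"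
      by (rule integral_linear[symmetric])
        (use integrable_orbit bounded_linear_T elim in \<open>auto simp: F_def\<close>)
    also have "\<dots> = integral {0..t} (F \<circ> (+) h)"
      using T_T_apply elim by (intro integral_cong) (auto simp: F_def)
    also have "\<dots> = integral {h..t+h} F" by (simp add: integral_shift_Icc_real add.commute)
    finally have shift: "T h (integral {0..t} F) = integral {h..t+h} F" .
    have "integral {0..h} F + integral {h..t+h} F = integral {0..t+h} F"
      "integral {0..t} F + integral {t..t+h} F = integral {0..t+h} F"
      by (rule Henstock_Kurzweil_Integration.integral_combine;
          use elim t integrable_orbit in \<open>auto simp: F_def\<close>)+
    with shift have "T h (integral {0..t} F) - integral {0..t} F
        = integral {t..t+h} F - integral {0..h} F"
      by (simp add: algebra_simps)
    then show ?case by (simp add: scaleR_diff_right)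
  qed
  moreover have "((\<lambda>h. inverse h *\<^sub>R integral {t..t+h} F - inverse h *\<^sub>R integral {0..0+h} F)
      \<longlongrightarrow> F t - F 0) (at_right 0)"
    unfolding F_def by (intro tendsto_diff integral_average_tendsto_at_right continuous_on_orbit t) simp
  ultimately have "((\<lambda>h. inverse h *\<^sub>R (T h (integral {0..t} F) - integral {0..t} F))
      \<longlongrightarrow> T t z - z) (at_right 0)"
    by (simp add: Lim_transform_eventually F_def T_0_apply)
  then show "integral {0..t} (\<lambda>s. T s z) \<in> D" and "A (integral {0..t} (\<lambda>s. T s z)) = T t z - z"
    unfolding F_def by (rule generatorI)+
qed

lemma orbit_eq_integral:
  assumes x: "x \<in> D" and t: "t \<ge> 0"
  shows "T t x = x + integral {0..t} (\<lambda>s. T s (A x))"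
proof -
  define G where "G = (\<lambda>s. T s (A x))"
  define g where "g = (\<lambda>\<tau>. T \<tau> x - integral {0..\<tau>} G)"
  have "g t = g 0"
  proof (rule right_derivative_zero_imp_eq[OF t])
    show "continuous_on {0..t} g" unfolding g_def G_def
      by (intro continuous_intros continuous_on_subset[OF continuous_on_orbit]
          indefinite_integral_continuous_1 integrable_orbit) auto
  next
    fix \<tau> assume \<tau>: "\<tau> \<in> {0..<t}"
    interpret T\<tau>: bounded_linear "T \<tau>" using bounded_linear_T \<tau> by simp
    have "eventually (\<lambda>h. T \<tau> (inverse h *\<^sub>R (T h x - x)) - inverse h *\<^sub>R integral {\<tau>..\<tau>+h} G
        = inverse h *\<^sub>R (g (\<tau>+h) - g \<tau>)) (at_right 0)"
      using eventually_at_right_less[of 0]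
    proof eventually_elim
      case (elim h)
      have "T \<tau> (T h x) = T (\<tau>+h) x" using T_T_apply elim \<tau> by simp
      moreover have "integral {0..\<tau>} G + integral {\<tau>..\<tau>+h} G = integral {0..\<tau>+h} G"
        by (rule Henstock_Kurzweil_Integration.integral_combine)
          (use elim \<tau> integrable_orbit in \<open>auto simp: G_def\<close>)
      ultimately show ?case unfolding g_def
        by (simp add: T\<tau>.diff T\<tau>.scale algebra_simps) (metis scaleR_add_right)
    qed
    moreover have "((\<lambda>h. T \<tau> (inverse h *\<^sub>R (T h x - x)) - inverse h *\<^sub>R integral {\<tau>..\<tau>+h} G)
        \<longlongrightarrow> T \<tau> (A x) - G \<tau>) (at_right 0)"
      unfolding G_def using \<tau>
      by (intro tendsto_diff T\<tau>.tendsto generator_tendsto x integral_average_tendsto_at_right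
          continuous_on_orbit) auto
    ultimately show "((\<lambda>h. inverse h *\<^sub>R (g (\<tau>+h) - g \<tau>)) \<longlongrightarrow> 0) (at_right 0)"
      by (simp add: Lim_transform_eventually G_def)
  qed
  then show ?thesis by (simp add: g_def T_0_apply G_def algebra_simps)
qed

lemma orbit_has_vector_derivative:
  assumes x: "x \<in> D" and t: "t \<ge> 0"
  shows "((\<lambda>s. T s x) has_vector_derivative T t (A x)) (at t within {0..})"
proof (rule has_vector_derivative_transform_within[where d=1])
  show "((\<lambda>s. x + integral {0..s} (\<lambda>r. T r (A x))) has_vector_derivative T t (A x))
      (at t within {0..})"
    using has_vector_derivative_add[OF has_vector_derivative_const
        integral_has_vector_derivative_atLeast_0[OF continuous_on_orbit t]]
    by simp
qed (use x t orbit_eq_integral in auto)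

lemma graph_bounded_continuous_on:
  fixes C :: "'a \<Rightarrow> 'y::banach" and x :: "real \<Rightarrow> 'a"
  assumes gb: "graph_bounded D A C" and xD: "\<And>t. t \<ge> 0 \<Longrightarrow> x t \<in> D"
    and xc: "continuous_on {0..} x" and Axc: "continuous_on {0..} (\<lambda>t. A (x t))"
  shows "continuous_on {0..} (\<lambda>t. C (x t))"
proof -
  obtain K where K: "\<forall>v\<in>D. norm (C v) \<le> K * (norm v + norm (A v))"
    and add: "\<forall>v\<in>D. \<forall>w\<in>D. C (v + w) = C v + C w"
    using gb unfolding graph_bounded_def by blast
  have bound: "norm (C (x s) - C (x t)) \<le> K * (norm (x s - x t) + norm (A (x s) - A (x t)))"
    if "s \<ge> 0" "t \<ge> 0" for s t
  proof -
    have D: "x s \<in> D" "x t \<in> D" using xD that by auto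
    then have "C (x s) - C (x t) = C (x s - x t)"
      using add generator_diff(1) by (metis add_diff_cancel diff_add_cancel)
    then show ?thesis using K[rule_format, of "x s - x t"] generator_diff[OF D] by simp
  qed
  show ?thesis unfolding continuous_on_def
  proof
    fix t :: real assume t: "t \<in> {0..}"
    have "((\<lambda>s. x s - x t) \<longlongrightarrow> 0) (at t within {0..})"
      "((\<lambda>s. A (x s) - A (x t)) \<longlongrightarrow> 0) (at t within {0..})"
      using xc Axc t by (simp_all add: continuous_on_def Lim_null[symmetric])
    then have "((\<lambda>s. K * (norm (x s - x t) + norm (A (x s) - A (x t)))) \<longlongrightarrow> 0) (at t within {0..})"
      using tendsto_mult_right_zero tendsto_add_zero tendsto_norm_zero by metis
    moreover have "eventually (\<lambda>s. norm (C (x s) - C (x t))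
        \<le> K * (norm (x s - x t) + norm (A (x s) - A (x t)))) (at t within {0..})"
      using t bound by (auto simp: eventually_at_filter)
    ultimately have "((\<lambda>s. C (x s) - C (x t)) \<longlongrightarrow> 0) (at t within {0..})"
      by (rule Lim_null_comparison[rotated])
    then show "((\<lambda>s. C (x s)) \<longlongrightarrow> C (x t)) (at t within {0..})"
      by (simp add: Lim_null[of _ "C (x t)"])
  qed
qed

lemma orbit_in_Sys:
  assumes B: "bounded_linear B" and gb: "graph_bounded D A C" and x: "x \<in> D"
  shows "(\<lambda>_. 0, \<lambda>t. T t x, \<lambda>t. C (T t x)) \<in> Sys D A B C"
proof -
  have A_orbit: "A (T t x) = T t (A x)" if "t \<ge> 0" for t using orbit_in_domain[OF x that] by simp
  have Ac: "continuous_on {0..} (\<lambda>t. A (T t x))"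
    using continuous_on_orbit by (rule continuous_on_eq) (simp add: A_orbit)
  show ?thesis
    unfolding Sys_def
    using B x Ac orbit_in_domain(1) orbit_has_vector_derivative A_orbit
    by (auto intro!: exI[of _ "\<lambda>t. T t (A x)"] continuous_on_orbit
        graph_bounded_continuous_on[OF gb] simp: linear_simps)
qed

lemma integral_orbit_in_Sys:
  assumes gb: "graph_bounded D A C"
  shows "(\<lambda>_. u, \<lambda>t. integral {0..t} (\<lambda>s. T s (B u)),
      \<lambda>t. C (integral {0..t} (\<lambda>s. T s (B u)))) \<in> Sys D A B C"
proof -
  define W where "W = (\<lambda>t. integral {0..t} (\<lambda>s. T s (B u)))"
  have W': "(W has_vector_derivative T t (B u)) (at t within {0..})" if "t \<ge> 0" for t
    unfolding W_def by (rule integral_has_vector_derivative_atLeast_0[OF continuous_on_orbit that])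
  then have Wc: "continuous_on {0..} W"
    by (auto simp: continuous_on_eq_continuous_within intro: has_vector_derivative_continuous)
  have Ac: "continuous_on {0..} (\<lambda>t. A (W t))"
    by (rule continuous_on_eq[of _ "\<lambda>t. T t (B u) - B u"])
      (auto intro!: continuous_intros continuous_on_orbit simp: W_def integral_orbit_in_domain)
  have "(\<lambda>_. u, W, \<lambda>t. C (W t)) \<in> Sys D A B C"
    unfolding Sys_def
    using Wc Ac W' integral_orbit_in_domain
    by (auto intro!: exI[of _ "\<lambda>t. T t (B u)"] continuous_on_orbit
        graph_bounded_continuous_on[OF gb] simp: W_def)
  then show ?thesis by (simp add: W_def)
qed

end

lemma Sys_initial_derivative:
  assumes "(u, x, y) \<in> Sys D A B C" and "(x has_vector_derivative v) (at 0 within {0..})"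
  shows "x 0 \<in> D" and "v = A (x 0) + B (u 0)" and "y 0 = C (x 0)"
proof -
  from assms(1) obtain x' where "(x has_vector_derivative x' 0) (at 0 within {0..})"
    and "x' 0 = A (x 0) + B (u 0)"
    unfolding Sys_def by auto
  moreover from this have "v = x' 0"
    using vector_derivative_unique_within[OF at_0_within_atLeast_0_neq_bot assms(2)] by blast
  ultimately show "v = A (x 0) + B (u 0)" by simp
  show "x 0 \<in> D" and "y 0 = C (x 0)" using assms(1) unfolding Sys_def by auto
qed

lemma Sys_eq_imp_agree:
  fixes B' :: "'u::banach \<Rightarrow> 'x::banach" and C :: "'x \<Rightarrow> 'y::banach"
  assumes "is_c0_generator D A" and B: "bounded_linear B" and gb: "graph_bounded D A C"
    and B': "bounded_linear B'" and eq: "Sys D A B C = Sys D' A' B' C'"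
  shows "D \<subseteq> D'" and "\<forall>x\<in>D. A' x = A x \<and> C' x = C x" and "B' = B"
proof -
  obtain T where "c0_semigroup T" and "generates T D A"
    using assms(1) unfolding is_c0_generator_def by blast
  then interpret c0_semigroup_generator T D A by unfold_locales
  have on_D: "x \<in> D' \<and> A' x = A x \<and> C' x = C x" if x: "x \<in> D" for x
  proof -
    have "(\<lambda>_. 0, \<lambda>t. T t x, \<lambda>t. C (T t x)) \<in> Sys D' A' B' C'"
      using orbit_in_Sys[OF B gb x] eq by simp
    note init = Sys_initial_derivative[OF this orbit_has_vector_derivative[OF x order_refl]]
    show ?thesis using init B' by (simp add: T_0_apply linear_simps)
  qed
  then show "D \<subseteq> D'" and "\<forall>x\<in>D. A' x = A x \<and> C' x = C x" by auto
  have "B' u = B u" for u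
  proof -
    define W where "W = (\<lambda>t. integral {0..t} (\<lambda>s. T s (B u)))"
    have "(\<lambda>_. u, W, \<lambda>t. C (W t)) \<in> Sys D' A' B' C'"
      using integral_orbit_in_Sys[OF gb, where B=B and u=u] eq by (simp add: W_def)
    moreover have "(W has_vector_derivative B u) (at 0 within {0..})"
      using integral_has_vector_derivative_atLeast_0[OF continuous_on_orbit order_refl]
      by (simp add: W_def T_0_apply)
    ultimately have "B u = A' (W 0) + B' u" by (rule Sys_initial_derivative(2))
    moreover have "A' 0 = 0" using on_D[OF generator_zero(1)] generator_zero(2) by simp
    ultimately show ?thesis by (simp add: W_def)
  qed
  then show "B' = B" by auto
qed

theorem proposition2p4:
  fixes S :: "((real \<Rightarrow> 'u::banach) \<times> (real \<Rightarrow> 'x::banach) \<times> (real \<Rightarrow> 'y::banach)) set"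
    and D D' :: "'x set" and A A' :: "'x \<Rightarrow> 'x"
    and B B' :: "'u \<Rightarrow> 'x" and C C' :: "'x \<Rightarrow> 'y"
  assumes "is_c0_generator D A" and "is_c0_generator D' A'"
    and "bounded_linear B" and "bounded_linear B'"
    and "graph_bounded D A C" and "graph_bounded D' A' C'"
    and "S = Sys D A B C" and "S = Sys D' A' B' C'"
  shows "D = D' \<and> (\<forall>x\<in>D. A x = A' x) \<and> B = B' \<and> (\<forall>x\<in>D. C x = C' x)"
proof -
  have eq: "Sys D A B C = Sys D' A' B' C'" using assms(7,8) by simp
  note forward = Sys_eq_imp_agree[OF assms(1,3,5,4) eq]
  note backward = Sys_eq_imp_agree[OF assms(2,4,6,3) eq[symmetric]]
  from forward backward show ?thesis by (metis subset_antisym)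
qed

end
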